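(* Let $X$, $Y$, $\mathcal{E}$ be Euclidean-space-valued random variables on a probability space $(\Omega,\mathcal{F},P)$, and let $\Phi$ be a random variable measurable with respect to $\sigma(X)$. Let $\mathcal{E}_\phi\in\sigma(\mathcal{E})$ and $\mathcal{E}_\psi$ be as described in the context. If $\Phi\in\mathcal{I}$, then $\mathcal{E}_\psi$ is conditionally independent of $(\Phi,Y)$ given $\mathcal{E}_\phi$.
   Context: $\mathcal{E}_\phi$ denotes a minimal (with respect to generated $\sigma$-algebras) random variable measurable with respect to $\sigma(\mathcal{E})$ such that $\Phi$ is conditionally independent of $\mathcal{E}$ given $\mathcal{E}_\phi$ (so $P(\Phi\mid\mathcal{E})=P(\Phi\mid\mathcal{E}_\phi)$). It is assumed that there is a random variable $\mathcal{E}_\psi$, independent of $\mathcal{E}_\phi$, with $\sigma(\mathcal{E})=\sigma(\mathcal{E}_\phi,\mathcal{E}_\psi)$; accordingly each realization $\epsilon\in\mathrm{supp}(\mathcal{E})$ is written $\epsilon=(\epsilon_\phi,\epsilon_\psi)$. The set of invariant features is $\mathcal{I}=\{\Phi\in\sigma(X): p(Y\mid\Phi,\epsilon)=p(Y\mid\Phi)\ \text{for all }\epsilon\in\mathrm{supp}(\mathcal{E})\}$, assumed non-empty. *)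

theory Defs
  imports "HOL-Probability.Probability"
begin

definition sigma_rv :: "'a measure \<Rightarrow> ('a \<Rightarrow> 'b) \<Rightarrow> 'b measure \<Rightarrow> 'a measure" where
  "sigma_rv M Z N = vimage_algebra (space M) Z N"

definition cond_prob :: "'a measure \<Rightarrow> 'a measure \<Rightarrow> ('a \<Rightarrow> 'b) \<Rightarrow> 'b set \<Rightarrow> 'a \<Rightarrow> real" where
  "cond_prob M F Z S = real_cond_exp M F (\<lambda>\<omega>. indicator S (Z \<omega>))"

definition same_cond_law ::
  "'a measure \<Rightarrow> 'a measure \<Rightarrow> 'a measure \<Rightarrow> ('a \<Rightarrow> 'b) \<Rightarrow> 'b measure \<Rightarrow> bool" where
  "same_cond_law M F G Z N \<longleftrightarrow>
     (\<forall>S\<in>sets N. AE \<omega> in M. cond_prob M F Z S \<omega> = cond_prob M G Z S \<omega>)"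

definition cond_indep ::
  "'a measure \<Rightarrow> ('a \<Rightarrow> 'b) \<Rightarrow> 'b measure \<Rightarrow> ('a \<Rightarrow> 'c) \<Rightarrow> 'c measure \<Rightarrow> 'a measure \<Rightarrow> bool" where
  "cond_indep M A NA B NB F \<longleftrightarrow>
     (\<forall>S\<in>sets NA. \<forall>T\<in>sets NB. AE \<omega> in M.
        real_cond_exp M F (\<lambda>\<omega>. indicator S (A \<omega>) * indicator T (B \<omega>)) \<omega>
        = cond_prob M F A S \<omega> * cond_prob M F B T \<omega>)"

definition invariant_feature ::
  "'a measure \<Rightarrow> ('a \<Rightarrow> 'x::euclidean_space) \<Rightarrow> ('a \<Rightarrow> 'y::euclidean_space)
   \<Rightarrow> ('a \<Rightarrow> 'e::euclidean_space) \<Rightarrow> ('a \<Rightarrow> 'f) \<Rightarrow> 'f measure \<Rightarrow> bool" where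
  "invariant_feature M X Y E Phi NF \<longleftrightarrow>
     Phi \<in> measurable (sigma_rv M X borel) NF \<and>
     same_cond_law M (sigma_rv M (\<lambda>\<omega>. (Phi \<omega>, E \<omega>)) (NF \<Otimes>\<^sub>M borel))
                     (sigma_rv M Phi NF) Y borel"

text \<open>Minimality is expressed over all
  sub-sigma-algebras G of sigma(E) (every such G is generated by a random variable,
  namely the identity onto (space M, G)).\<close>
definition minimal_env_part ::
  "'a measure \<Rightarrow> ('a \<Rightarrow> 'e::euclidean_space) \<Rightarrow> ('a \<Rightarrow> 'f) \<Rightarrow> 'f measure
   \<Rightarrow> ('a \<Rightarrow> 'p) \<Rightarrow> 'p measure \<Rightarrow> bool" where
  "minimal_env_part M E Phi NF Ephi NP \<longleftrightarrow>
     Ephi \<in> measurable (sigma_rv M E borel) NP \<and>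
     same_cond_law M (sigma_rv M E borel) (sigma_rv M Ephi NP) Phi NF \<and>
     (\<forall>G. space G = space M \<and> sets G \<subseteq> sets (sigma_rv M E borel) \<and>
          same_cond_law M (sigma_rv M E borel) G Phi NF
          \<longrightarrow> \<not> (sets G \<subset> sets (sigma_rv M Ephi NP)))"

end

theory Submission
  imports Defs
begin

(*
  Fix U and put B = {E_psi \<in> U}.  Conditional independence given sigma(E_phi) amounts to
  P(A \<inter> B \<inter> {(Phi, Y) \<in> W}) = P(B) P(A \<inter> {(Phi, Y) \<in> W}) for all A \<in> sigma(E_phi), and by
  Dynkin's pi-lambda theorem it suffices to take rectangles W = S \<times> T.  The factor P(B) is split
  off by one device, used twice: if an event X has the same conditional probability given
  sigma-algebras F and G, then a relation P(D \<inter> C) = c P(D' \<inter> C) between events D, D' of G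
  that holds for all C \<in> F also holds for C = X.  Minimality of E_phi, P(Phi | E) = P(Phi | E_phi),
  carries the independence of B from sigma(E_phi) over to {Phi \<in> S}; invariance of Phi,
  P(Y | Phi, E) = P(Y | Phi), then carries it over to {Y \<in> T}.
*)

lemma subalgebra_sigma_rv: "Z \<in> measurable M N \<Longrightarrow> subalgebra M (sigma_rv M Z N)"
  unfolding subalgebra_def sigma_rv_def
  by (auto simp: sets_vimage_algebra2 measurable_def)

lemma measurable_sigma_rv: "Z \<in> measurable M N \<Longrightarrow> Z \<in> measurable (sigma_rv M Z N) N"
  unfolding sigma_rv_def by (intro measurable_vimage_algebra1) (auto simp: measurable_def)

lemma sets_sigma_rv: "Z \<in> measurable M N \<Longrightarrow> sets (sigma_rv M Z N) = {Z -` S \<inter> space M | S. S \<in> sets N}"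
  unfolding sigma_rv_def by (intro sets_vimage_algebra2) (auto simp: measurable_def)

lemma sets_sigma_rv_subset:
  assumes "Z \<in> measurable F N" "space F = space M"
  shows "sets (sigma_rv M Z N) \<subseteq> sets F"
proof -
  have "Z \<in> space M \<rightarrow> space N" using assms by (auto simp: measurable_def)
  then show ?thesis
    using assms unfolding sigma_rv_def by (auto simp: sets_vimage_algebra2 dest: measurable_sets)
qed

lemma space_sigma_rv [simp]: "space (sigma_rv M Z N) = space M"
  by (simp add: sigma_rv_def)

lemma measurable_sigma_rv_Pair:
  assumes "A \<in> measurable M NA" "B \<in> measurable M NB"
  shows "A \<in> measurable (sigma_rv M (\<lambda>\<omega>. (A \<omega>, B \<omega>)) (NA \<Otimes>\<^sub>M NB)) NA"
    and "B \<in> measurable (sigma_rv M (\<lambda>\<omega>. (A \<omega>, B \<omega>)) (NA \<Otimes>\<^sub>M NB)) NB"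
  using measurable_sigma_rv[OF measurable_Pair[OF assms]]
  by (simp_all add: measurable_pair_iff comp_def)

lemma vimage_in_sets_sigma_rv: "S \<in> sets N \<Longrightarrow> Z -` S \<inter> space M \<in> sets (sigma_rv M Z N)"
  unfolding sigma_rv_def by (rule in_vimage_algebra)

lemma (in prob_space) sigma_finite_subalgebraI: "subalgebra M F \<Longrightarrow> sigma_finite_subalgebra M F"
  by (intro finite_measure_subalgebra_is_sigma_finite finite_measure_subalgebra.intro
      finite_measure_axioms finite_measure_subalgebra_axioms.intro)

context sigma_finite_subalgebra
begin

lemma real_cond_exp_indicator_vimage:
  assumes "Z \<in> measurable M N" "S \<in> sets N"
  shows "AE x in M. real_cond_exp M F (\<lambda>x. indicator S (Z x)) x
           = real_cond_exp M F (indicator (Z -` S \<inter> space M)) x"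
  using assms by (intro real_cond_exp_cong) (auto split: split_indicator)

lemma real_cond_exp_eq_cmultI:
  fixes f g :: "'a \<Rightarrow> real"
  assumes "integrable M f" "integrable M g"
    and "\<And>C. C \<in> sets F \<Longrightarrow> (\<integral>x\<in>C. f x \<partial>M) = c * (\<integral>x\<in>C. g x \<partial>M)"
  shows "AE x in M. real_cond_exp M F f x = c * real_cond_exp M F g x"
proof (rule real_cond_exp_charact)
  fix C assume "C \<in> sets F"
  then show "(\<integral>x\<in>C. f x \<partial>M) = (\<integral>x\<in>C. c * real_cond_exp M F g x \<partial>M)"
    using assms by (simp add: real_cond_exp_intA)
qed (use assms in auto)

end

lemma (in prob_space) set_integral_indicator_eq_prob:
  assumes "C \<in> events"
  shows "(\<integral>x\<in>C. indicator D x \<partial>M) = prob (C \<inter> D)"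
proof -
  have "C \<inter> D \<inter> space M = C \<inter> D" using sets.sets_into_space[OF assms] by auto
  then show ?thesis unfolding set_lebesgue_integral_def by (simp add: indicator_inter_arith[symmetric])
qed

lemma (in prob_space) same_cond_law_vimageD:
  assumes "same_cond_law M G F Z N" "subalgebra M G" "subalgebra M F"
    and "Z \<in> measurable M N" "S \<in> sets N"
  shows "AE x in M. real_cond_exp M G (indicator (Z -` S \<inter> space M)) x
                    = real_cond_exp M F (indicator (Z -` S \<inter> space M)) x"
proof -
  interpret G: sigma_finite_subalgebra M G using assms(2) by (rule sigma_finite_subalgebraI)
  interpret F: sigma_finite_subalgebra M F using assms(3) by (rule sigma_finite_subalgebraI)
  show ?thesis
    using assms(1,5) G.real_cond_exp_indicator_vimage[OF assms(4,5)]
      F.real_cond_exp_indicator_vimage[OF assms(4,5)]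
    unfolding same_cond_law_def cond_prob_def by auto
qed

lemma (in prob_space) prob_Int_scaled_if_real_cond_exp_eq:
  assumes F: "subalgebra M F" and G: "subalgebra M G" and X: "X \<in> events"
    and same: "AE x in M. real_cond_exp M G (indicator X) x = real_cond_exp M F (indicator X) x"
    and D: "D \<in> sets G" "D' \<in> sets G"
    and scaled: "\<And>C. C \<in> sets F \<Longrightarrow> prob (D \<inter> C) = c * prob (D' \<inter> C)"
  shows "prob (D \<inter> X) = c * prob (D' \<inter> X)"
proof -
  interpret F: sigma_finite_subalgebra M F using F by (rule sigma_finite_subalgebraI)
  interpret G: sigma_finite_subalgebra M G using G by (rule sigma_finite_subalgebraI)
  have X_int: "integrable M (indicator X :: 'a \<Rightarrow> real)"
    using X by (auto simp: less_top[symmetric])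
  define k where "k = real_cond_exp M F (indicator X)"
  have k_int: "integrable M k"
    unfolding k_def using X_int by (rule F.real_cond_exp_int)
  have k_meas: "k \<in> borel_measurable F"
    unfolding k_def by (rule borel_measurable_cond_exp)
  have prob_eq: "prob (H \<inter> X) = (\<integral>x. k x * real_cond_exp M F (indicator H) x \<partial>M)"
    if H: "H \<in> sets G" for H
  proof -
    have HM: "H \<in> events" using H G by (auto simp: subalgebra_def)
    have "prob (H \<inter> X) = (\<integral>x. indicator H x * indicator X x \<partial>M)"
      using HM X by (simp add: indicator_inter_arith[symmetric] Int_absorb2)
    also have "\<dots> = (\<integral>x. indicator H x * real_cond_exp M G (indicator X) x \<partial>M)"
      using H X integrable_real_mult_indicator[OF HM X_int]
      by (intro G.real_cond_exp_intg(2)[symmetric]) (auto simp: mult.commute)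
    also have "\<dots> = (\<integral>x. indicator H x * k x \<partial>M)"
      unfolding k_def using same HM by (intro integral_cong_AE) auto
    also have "\<dots> = (\<integral>x. k x * real_cond_exp M F (indicator H) x \<partial>M)"
      using HM k_meas integrable_real_mult_indicator[OF HM k_int]
      by (subst F.real_cond_exp_intg(2)) (auto simp: mult.commute)
    finally show ?thesis .
  qed
  have "AE x in M. real_cond_exp M F (indicator D) x = c * real_cond_exp M F (indicator D') x"
  proof (rule F.real_cond_exp_eq_cmultI)
    fix C assume "C \<in> sets F"
    then show "(\<integral>x\<in>C. indicator D x \<partial>M) = c * (\<integral>x\<in>C. indicator D' x \<partial>M)"
      using F scaled by (simp add: set_integral_indicator_eq_prob subalgebra_def Int_commute subset_eq)
  qed (use D G in \<open>auto simp: subalgebra_def less_top[symmetric]\<close>)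
  then have "(\<integral>x. k x * real_cond_exp M F (indicator D) x \<partial>M)
      = (\<integral>x. c * (k x * real_cond_exp M F (indicator D') x) \<partial>M)"
    unfolding k_def by (intro integral_cong_AE) auto
  also have "\<dots> = c * (\<integral>x. k x * real_cond_exp M F (indicator D') x \<partial>M)"
    by (rule integral_mult_right_zero)
  finally have "(\<integral>x. k x * real_cond_exp M F (indicator D) x \<partial>M)
      = c * (\<integral>x. k x * real_cond_exp M F (indicator D') x \<partial>M)" .
  then show ?thesis using prob_eq D by simp
qed

lemma (in prob_space) prob_Int_vimage_scaled_sigma_sets:
  assumes Z: "Z \<in> measurable M N"
    and gen: "sets N = sigma_sets (space N) Gen" "Int_stable Gen" "Gen \<subseteq> Pow (space N)"
    and C: "C \<in> events" and D: "D \<in> events"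
    and top: "prob C = c * prob D"
    and generator: "\<And>W. W \<in> Gen \<Longrightarrow>
      prob (C \<inter> (Z -` W \<inter> space M)) = c * prob (D \<inter> (Z -` W \<inter> space M))"
    and W: "W \<in> sets N"
  shows "prob (C \<inter> (Z -` W \<inter> space M)) = c * prob (D \<inter> (Z -` W \<inter> space M))"
proof -
  have vimage_events: "Z -` W \<inter> space M \<in> events" if "W \<in> sigma_sets (space N) Gen" for W
    using that gen(1) Z by (auto intro: measurable_sets)
  from gen(2,3) W[unfolded gen(1)] show ?thesis
  proof (induction rule: sigma_sets_induct_disjoint)
    case (basic W)
    then show ?case by (rule generator)
  next
    case empty
    then show ?case by simp
  next
    case (compl W)
    have "Z -` (space N - W) \<inter> space M = space M - (Z -` W \<inter> space M)"
      using measurable_space[OF Z] by auto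
    moreover have "H \<inter> (space M - (Z -` W \<inter> space M)) = H - (Z -` W \<inter> space M)" if "H \<in> events" for H
      using sets.sets_into_space[OF that] by auto
    ultimately show ?case
      using C D vimage_events[OF compl(1)] compl(2) top
      by (simp add: finite_measure_Diff' right_diff_distrib)
  next
    case (union F)
    let ?X = "\<lambda>i. Z -` F i \<inter> space M"
    have disj: "disjoint_family (\<lambda>i. H \<inter> ?X i)" for H
      using union(1) by (auto simp: disjoint_family_on_def)
    have sums: "(\<lambda>i. prob (H \<inter> ?X i)) sums prob (H \<inter> (Z -` (\<Union>i. F i) \<inter> space M))"
      if "H \<in> events" for H
    proof -
      have eq: "H \<inter> (Z -` (\<Union>i. F i) \<inter> space M) = (\<Union>i. H \<inter> ?X i)" by auto
      show ?thesis
        unfolding eq using that vimage_events union(2) disj by (intro finite_measure_UNION) auto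
    qed
    show ?case
      using sums[OF C] sums_mult[OF sums[OF D], of c] union(3) by (simp add: sums_unique2)
  qed
qed

lemma (in prob_space) cond_indep_if_prob_Int_vimage_eq:
  assumes F: "subalgebra M F" and A: "A \<in> measurable M NA" and B: "B \<in> measurable M NB"
    and eq: "\<And>C S T. C \<in> sets F \<Longrightarrow> S \<in> sets NA \<Longrightarrow> T \<in> sets NB \<Longrightarrow>
      prob (C \<inter> (A -` S \<inter> space M) \<inter> (B -` T \<inter> space M))
        = prob (A -` S \<inter> space M) * prob (C \<inter> (B -` T \<inter> space M))"
  shows "cond_indep M A NA B NB F"
  unfolding cond_indep_def cond_prob_def
proof (intro ballI)
  interpret F: sigma_finite_subalgebra M F using F by (rule sigma_finite_subalgebraI)
  fix S T assume S: "S \<in> sets NA" and T: "T \<in> sets NB"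
  define XS where "XS = A -` S \<inter> space M"
  define XT where "XT = B -` T \<inter> space M"
  have events: "XS \<in> events" "XT \<in> events"
    unfolding XS_def XT_def using A B S T by (auto intro: measurable_sets)
  have CM: "C \<in> events" if "C \<in> sets F" for C
    using F that by (auto simp: subalgebra_def)
  have "AE x in M. real_cond_exp M F (indicator XS) x = prob XS * real_cond_exp M F (\<lambda>_. 1) x"
  proof (rule F.real_cond_exp_eq_cmultI)
    fix C assume C: "C \<in> sets F"
    have "B -` space NB \<inter> space M = space M"
      using measurable_space[OF B] by auto
    then have "prob (C \<inter> XS) = prob XS * prob C"
      using eq[OF C S sets.top] sets.sets_into_space[OF CM[OF C]]
      by (simp add: XS_def Int_assoc Int_absorb2)
    moreover have "(\<integral>x\<in>C. 1 \<partial>M) = prob C"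
      using sets.sets_into_space[OF CM[OF C]] by (simp add: set_lebesgue_integral_def Int_absorb2)
    ultimately show "(\<integral>x\<in>C. indicator XS x \<partial>M) = prob XS * (\<integral>x\<in>C. 1 \<partial>M)"
      by (simp add: set_integral_indicator_eq_prob[OF CM[OF C]])
  qed (use events in \<open>auto simp: less_top[symmetric]\<close>)
  moreover have "AE x in M. real_cond_exp M F (\<lambda>_. 1) x = 1"
    by (rule F.real_cond_exp_F_meas) auto
  moreover have "AE x in M. real_cond_exp M F (indicator (XS \<inter> XT)) x
      = prob XS * real_cond_exp M F (indicator XT) x"
  proof (rule F.real_cond_exp_eq_cmultI)
    fix C assume C: "C \<in> sets F"
    show "(\<integral>x\<in>C. indicator (XS \<inter> XT) x \<partial>M) = prob XS * (\<integral>x\<in>C. indicator XT x \<partial>M)"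
      using eq[OF C S T] CM[OF C] by (simp add: set_integral_indicator_eq_prob XS_def XT_def Int_assoc)
  qed (use events in \<open>auto simp: less_top[symmetric]\<close>)
  moreover have "AE x in M. real_cond_exp M F (\<lambda>x. indicator S (A x) * indicator T (B x)) x
      = real_cond_exp M F (indicator (XS \<inter> XT)) x"
    unfolding XS_def XT_def using A B S T
    by (intro F.real_cond_exp_cong) (auto split: split_indicator)
  ultimately show "AE x in M. real_cond_exp M F (\<lambda>x. indicator S (A x) * indicator T (B x)) x
      = real_cond_exp M F (\<lambda>x. indicator S (A x)) x * real_cond_exp M F (\<lambda>x. indicator T (B x)) x"
    using F.real_cond_exp_indicator_vimage[OF A S] F.real_cond_exp_indicator_vimage[OF B T]
    unfolding XS_def XT_def by eventually_elim simp
qed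

(* FEphi, FE and FPhiE stand for sigma(E_phi), sigma(E) and sigma(Phi, E). *)
locale invariance_setting = prob_space M for M :: "'a measure" +
  fixes FEphi FE FPhiE :: "'a measure"
    and Phi :: "'a \<Rightarrow> 'f" and NF :: "'f measure" and Y :: "'a \<Rightarrow> 'y::topological_space"
  assumes subalgebra_FEphi: "subalgebra M FEphi"
    and subalgebra_FE: "subalgebra M FE"
    and subalgebra_FPhiE: "subalgebra M FPhiE"
    and sets_FEphi_subset: "sets FEphi \<subseteq> sets FE"
    and sets_FE_subset: "sets FE \<subseteq> sets FPhiE"
    and Phi_measurable: "Phi \<in> measurable FPhiE NF"
    and Y_measurable: "Y \<in> borel_measurable M"
    and minimal: "same_cond_law M FE FEphi Phi NF"
    and invariant: "same_cond_law M FPhiE (sigma_rv M Phi NF) Y borel"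
begin

lemma Phi_measurable_M: "Phi \<in> measurable M NF"
  using Phi_measurable subalgebra_FPhiE by (rule measurable_from_subalg[rotated])

context
  fixes B assumes B: "B \<in> sets FE"
    and indep: "\<And>C. C \<in> sets FEphi \<Longrightarrow> prob (C \<inter> B) = prob C * prob B"
begin

lemma prob_Int_vimage_Phi:
  assumes A: "A \<in> sets FEphi" and S: "S \<in> sets NF"
  shows "prob (A \<inter> B \<inter> (Phi -` S \<inter> space M)) = prob B * prob (A \<inter> (Phi -` S \<inter> space M))"
proof (rule prob_Int_scaled_if_real_cond_exp_eq[OF subalgebra_FEphi subalgebra_FE])
  show "Phi -` S \<inter> space M \<in> events"
    using Phi_measurable_M S by (rule measurable_sets)
  show "AE x in M. real_cond_exp M FE (indicator (Phi -` S \<inter> space M)) x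
      = real_cond_exp M FEphi (indicator (Phi -` S \<inter> space M)) x"
    by (rule same_cond_law_vimageD[OF minimal subalgebra_FE subalgebra_FEphi Phi_measurable_M S])
  show "A \<inter> B \<in> sets FE" "A \<in> sets FE"
    using A B sets_FEphi_subset by auto
  fix C assume "C \<in> sets FEphi"
  then have "prob (A \<inter> C \<inter> B) = prob (A \<inter> C) * prob B"
    using A by (intro indep) auto
  then show "prob (A \<inter> B \<inter> C) = prob B * prob (A \<inter> C)"
    by (simp add: ac_simps)
qed

lemma prob_Int_vimage_Phi_Y:
  assumes A: "A \<in> sets FEphi" and S: "S \<in> sets NF" and T: "T \<in> sets borel"
  shows "prob (A \<inter> B \<inter> (Phi -` S \<inter> space M) \<inter> (Y -` T \<inter> space M))
    = prob B * prob (A \<inter> (Phi -` S \<inter> space M) \<inter> (Y -` T \<inter> space M))"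
proof (rule prob_Int_scaled_if_real_cond_exp_eq[OF subalgebra_sigma_rv[OF Phi_measurable_M]
      subalgebra_FPhiE])
  show "Y -` T \<inter> space M \<in> events"
    using Y_measurable T by (rule measurable_sets)
  show "AE x in M. real_cond_exp M FPhiE (indicator (Y -` T \<inter> space M)) x
      = real_cond_exp M (sigma_rv M Phi NF) (indicator (Y -` T \<inter> space M)) x"
    by (rule same_cond_law_vimageD[OF invariant subalgebra_FPhiE
          subalgebra_sigma_rv[OF Phi_measurable_M] Y_measurable T])
  show "A \<inter> B \<inter> (Phi -` S \<inter> space M) \<in> sets FPhiE" "A \<inter> (Phi -` S \<inter> space M) \<in> sets FPhiE"
    using A B measurable_sets[OF Phi_measurable S] subalgebra_FPhiE sets_FEphi_subset sets_FE_subset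
    by (auto simp: subalgebra_def)
  fix C assume "C \<in> sets (sigma_rv M Phi NF)"
  then obtain S' where S': "S' \<in> sets NF" and C: "C = Phi -` S' \<inter> space M"
    using sets_sigma_rv[OF Phi_measurable_M] by auto
  have "H \<inter> (Phi -` S \<inter> space M) \<inter> C = H \<inter> (Phi -` (S \<inter> S') \<inter> space M)" for H
    unfolding C by auto
  then show "prob (A \<inter> B \<inter> (Phi -` S \<inter> space M) \<inter> C) = prob B * prob (A \<inter> (Phi -` S \<inter> space M) \<inter> C)"
    using prob_Int_vimage_Phi[OF A sets.Int[OF S S']] by simp
qed

lemma prob_Int_vimage_Phi_Y_pair:
  fixes W :: "('f \<times> 'y) set"
  assumes A: "A \<in> sets FEphi" and W: "W \<in> sets (NF \<Otimes>\<^sub>M borel)"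
  shows "prob (A \<inter> B \<inter> ((\<lambda>x. (Phi x, Y x)) -` W \<inter> space M))
    = prob B * prob (A \<inter> ((\<lambda>x. (Phi x, Y x)) -` W \<inter> space M))"
proof (rule prob_Int_vimage_scaled_sigma_sets[OF _ sets_pair_measure[folded space_pair_measure]
      Int_stable_pair_measure_generator pair_measure_closed[folded space_pair_measure]])
  show "(\<lambda>x. (Phi x, Y x)) \<in> measurable M (NF \<Otimes>\<^sub>M borel)"
    using Phi_measurable_M Y_measurable by (rule measurable_Pair)
  show "A \<inter> B \<in> events" "A \<in> events"
    using A B subalgebra_FEphi subalgebra_FE by (auto simp: subalgebra_def)
  show "prob (A \<inter> B) = prob B * prob A"
    using indep[OF A] by simp
  fix R :: "('f \<times> 'y) set"
  assume "R \<in> {S \<times> T |S T. S \<in> sets NF \<and> T \<in> sets borel}"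
  then obtain S T where R: "R = S \<times> T" and S: "S \<in> sets NF" and T: "T \<in> sets borel"
    by auto
  have "H \<inter> ((\<lambda>x. (Phi x, Y x)) -` R \<inter> space M) = H \<inter> (Phi -` S \<inter> space M) \<inter> (Y -` T \<inter> space M)"
    for H unfolding R by auto
  then show "prob (A \<inter> B \<inter> ((\<lambda>x. (Phi x, Y x)) -` R \<inter> space M))
      = prob B * prob (A \<inter> ((\<lambda>x. (Phi x, Y x)) -` R \<inter> space M))"
    using prob_Int_vimage_Phi_Y[OF A S T] by simp
qed (use W in simp)

end

lemma cond_indep_Epsi_Phi_Y:
  assumes Epsi: "Epsi \<in> measurable FE NQ"
    and indep: "\<And>C U. C \<in> sets FEphi \<Longrightarrow> U \<in> sets NQ \<Longrightarrow>
      prob (C \<inter> (Epsi -` U \<inter> space M)) = prob C * prob (Epsi -` U \<inter> space M)"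
  shows "cond_indep M Epsi NQ (\<lambda>\<omega>. (Phi \<omega>, Y \<omega>)) (NF \<Otimes>\<^sub>M borel) FEphi"
proof (rule cond_indep_if_prob_Int_vimage_eq[OF subalgebra_FEphi])
  show "Epsi \<in> measurable M NQ"
    using Epsi subalgebra_FE by (rule measurable_from_subalg[rotated])
  show "(\<lambda>\<omega>. (Phi \<omega>, Y \<omega>)) \<in> measurable M (NF \<Otimes>\<^sub>M borel)"
    using Phi_measurable_M Y_measurable by (rule measurable_Pair)
  fix C U and W :: "('f \<times> 'y) set" assume "C \<in> sets FEphi" "U \<in> sets NQ" "W \<in> sets (NF \<Otimes>\<^sub>M borel)"
  moreover have "Epsi -` U \<inter> space M \<in> sets FE" if "U \<in> sets NQ" for U
    using measurable_sets[OF Epsi that] subalgebra_FE by (simp add: subalgebra_def)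
  ultimately show "prob (C \<inter> (Epsi -` U \<inter> space M) \<inter> ((\<lambda>\<omega>. (Phi \<omega>, Y \<omega>)) -` W \<inter> space M))
      = prob (Epsi -` U \<inter> space M) * prob (C \<inter> ((\<lambda>\<omega>. (Phi \<omega>, Y \<omega>)) -` W \<inter> space M))"
    using prob_Int_vimage_Phi_Y_pair indep by blast
qed

end

theorem lemma1:
  fixes M :: "'a measure"
    and X :: "'a \<Rightarrow> 'x::euclidean_space"
    and Y :: "'a \<Rightarrow> 'y::euclidean_space"
    and E :: "'a \<Rightarrow> 'e::euclidean_space"
    and Phi :: "'a \<Rightarrow> 'f" and NF :: "'f measure"
    and Ephi :: "'a \<Rightarrow> 'p" and NP :: "'p measure"
    and Epsi :: "'a \<Rightarrow> 'q" and NQ :: "'q measure"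
  assumes "prob_space M"
    and "X \<in> borel_measurable M" and "Y \<in> borel_measurable M" and "E \<in> borel_measurable M"
    and "Phi \<in> measurable (sigma_rv M X borel) NF"
    and "minimal_env_part M E Phi NF Ephi NP"
    and "Epsi \<in> measurable M NQ"
    and "prob_space.indep_set M (sets (sigma_rv M Ephi NP)) (sets (sigma_rv M Epsi NQ))"
    and "sets (sigma_rv M E borel) = sets (sigma_rv M (\<lambda>\<omega>. (Ephi \<omega>, Epsi \<omega>)) (NP \<Otimes>\<^sub>M NQ))"
    and "\<exists>Psi::'a \<Rightarrow> 'f. invariant_feature M X Y E Psi NF"
    and "invariant_feature M X Y E Phi NF"
  shows "cond_indep M Epsi NQ (\<lambda>\<omega>. (Phi \<omega>, Y \<omega>)) (NF \<Otimes>\<^sub>M borel) (sigma_rv M Ephi NP)"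
proof -
  interpret prob_space M by fact
  have Phi: "Phi \<in> measurable M NF"
    using measurable_from_subalg[OF subalgebra_sigma_rv[OF assms(2)] assms(5)] .
  have Ephi_FE: "Ephi \<in> measurable (sigma_rv M E borel) NP"
    using assms(6) unfolding minimal_env_part_def by blast
  have Ephi: "Ephi \<in> measurable M NP"
    using measurable_from_subalg[OF subalgebra_sigma_rv[OF assms(4)] Ephi_FE] .
  interpret invariance_setting M "sigma_rv M Ephi NP" "sigma_rv M E borel"
    "sigma_rv M (\<lambda>\<omega>. (Phi \<omega>, E \<omega>)) (NF \<Otimes>\<^sub>M borel)" Phi NF Y
  proof
    show "sets (sigma_rv M Ephi NP) \<subseteq> sets (sigma_rv M E borel)"
      using Ephi_FE by (simp add: sets_sigma_rv_subset)
    show "sets (sigma_rv M E borel) \<subseteq> sets (sigma_rv M (\<lambda>\<omega>. (Phi \<omega>, E \<omega>)) (NF \<Otimes>\<^sub>M borel))"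
      using measurable_sigma_rv_Pair(2)[OF Phi assms(4)] by (simp add: sets_sigma_rv_subset)
  qed (use assms(3,4,6,11) Phi Ephi measurable_sigma_rv_Pair(1)[OF Phi assms(4)] in
      \<open>auto simp: subalgebra_sigma_rv minimal_env_part_def invariant_feature_def\<close>)
  have "Epsi \<in> measurable (sigma_rv M E borel) NQ"
    using measurable_sigma_rv_Pair(2)[OF Ephi assms(7)] assms(9) by (simp cong: measurable_cong_sets)
  then show ?thesis
    by (rule cond_indep_Epsi_Phi_Y)
      (use indep_setD[OF assms(8)] vimage_in_sets_sigma_rv in blast)
qed

end
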